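(* In the single-intervention standard stepped-wedge design ($m=1$, $T\ge3$ periods, $I=T-1$ clusters, cluster $i$ receiving the intervention exactly in periods $j>i$), if $\mathrm E(\bar{\mathbf y}_i)=\beta+\mathbf Z_i\delta$ with $\delta=(\delta_1,\dots,\delta_{T-1})'$ and $2+b-bT\neq0$, the GLS constant-effect estimator $\hat\theta$ satisfies $$\mathrm E(\hat\theta)=\frac{6\sum_{j=1}^{T-1}w_j\delta_j}{T(T-1)(T-2)(2+b-bT)},\qquad w_j=(T-j)\big[(b-1-bT)j+(1+b)(T-1)\big].$$
   Context: Cluster-period means $\bar{\mathbf y}_i\in\mathbb R^T$ with $\mathrm{Cov}(\bar{\mathbf y}_i)=\Sigma=\sigma_\alpha^2\mathbf 1\mathbf 1'+(\sigma_\epsilon^2/n)\mathbf I_T$, common cluster-period size $n$. $x_{ij}=1$ iff $j>i$; $\mathbf X_i=(x_{i1},\dots,x_{iT})'$. Exposure time $e_{ij}=\max\{j-i,0\}$; $\mathbf Z_i$ is the $T\times(T-1)$ matrix with $(j,e)$ entry $1$ if $e_{ij}=e$, else $0$. $\hat\theta$ is the GLS estimator (known $\Sigma$) of $\theta$ in the working model $\bar{\mathbf y}_i=\beta+\mathbf X_i\theta+\mathbf 1\alpha_i+\bar\epsilon_i$ with unrestricted $\beta\in\mathbb R^T$. $b=\sigma_\alpha^2/(T\sigma_\alpha^2+\sigma_\epsilon^2/n)$. *)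

theory Defs
  imports "HOL-Probability.Probability"
begin

text \<open>Standard stepped-wedge design with T periods (indexed 1..T) and I = T-1 clusters
(indexed 1..T-1). Matrices/vectors are functions on natural indices; only indices in the
stated ranges matter.\<close>

definition sw_x :: "nat \<Rightarrow> nat \<Rightarrow> real" where
  "sw_x i j = (if j > i then 1 else 0)"

definition sw_exptime :: "nat \<Rightarrow> nat \<Rightarrow> nat" where
  "sw_exptime i j = max (j - i) 0"

definition sw_Z :: "nat \<Rightarrow> nat \<Rightarrow> nat \<Rightarrow> real" where
  "sw_Z i j e = (if sw_exptime i j = e then 1 else 0)"

text \<open>Sigma = sa * 1 1' + (se / n) I_T, with sa = sigma_alpha^2, se = sigma_epsilon^2.\<close>
definition sw_Sigma :: "real \<Rightarrow> real \<Rightarrow> nat \<Rightarrow> nat \<Rightarrow> nat \<Rightarrow> real" where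
  "sw_Sigma sa se n j k = sa + (if j = k then se / real n else 0)"

definition sw_Sigma_inv :: "nat \<Rightarrow> real \<Rightarrow> real \<Rightarrow> nat \<Rightarrow> nat \<Rightarrow> nat \<Rightarrow> real" where
  "sw_Sigma_inv T sa se n = (THE W.
     (\<forall>j k. (j \<notin> {1..T} \<or> k \<notin> {1..T}) \<longrightarrow> W j k = 0) \<and>
     (\<forall>j\<in>{1..T}. \<forall>k\<in>{1..T}.
       (\<Sum>l=1..T. sw_Sigma sa se n j l * W l k) = (if j = k then 1 else 0)))"

text \<open>GLS criterion of the working model ybar_i = beta + X_i theta + 1 alpha_i + eps_i:
  sum_i (ybar_i - beta - X_i theta)' Sigma^{-1} (ybar_i - beta - X_i theta).\<close>
definition sw_gls_obj ::
  "nat \<Rightarrow> real \<Rightarrow> real \<Rightarrow> nat \<Rightarrow> (nat \<Rightarrow> nat \<Rightarrow> real) \<Rightarrow> (nat \<Rightarrow> real) \<Rightarrow> real \<Rightarrow> real" where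
  "sw_gls_obj T sa se n y beta theta =
     (\<Sum>i=1..T-1. \<Sum>j=1..T. \<Sum>k=1..T.
        (y i j - beta j - sw_x i j * theta) * sw_Sigma_inv T sa se n j k *
        (y i k - beta k - sw_x i k * theta))"

definition sw_theta_hat ::
  "nat \<Rightarrow> real \<Rightarrow> real \<Rightarrow> nat \<Rightarrow> (nat \<Rightarrow> nat \<Rightarrow> real) \<Rightarrow> real" where
  "sw_theta_hat T sa se n y = (THE theta. \<exists>beta. \<forall>beta' theta'.
      sw_gls_obj T sa se n y beta theta \<le> sw_gls_obj T sa se n y beta' theta')"

definition sw_b :: "nat \<Rightarrow> real \<Rightarrow> real \<Rightarrow> nat \<Rightarrow> real" where
  "sw_b T sa se n = sa / (real T * sa + se / real n)"

end

theory Submission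
  imports Defs
begin

text \<open>With \<open>s = \<sigma>\<^sub>\<epsilon>\<^sup>2/n\<close> the inverse of \<open>\<Sigma>\<close> is \<open>(I - b 1 1')/s\<close>, so the GLS criterion is,
up to the factor \<open>1/s\<close>, the sum over clusters of the positive definite form
\<open>B(u,v) = u'v - b (1'u)(1'v)\<close> evaluated at the residuals. Centring the treatment indicators
over clusters, \<open>x\<^sub>i - x\<^sub>0\<close> with \<open>x\<^sub>0\<close> their cluster average, separates \<open>\<theta>\<close> from the period
effects: the criterion is minimised exactly when
\<open>\<theta> = \<Sum>\<^sub>i B(y\<^sub>i, x\<^sub>i - x\<^sub>0) / \<Sum>\<^sub>i B(x\<^sub>i - x\<^sub>0, x\<^sub>i - x\<^sub>0)\<close>. This is linear in the data, and the
centred indicators sum to zero over clusters, so \<open>\<beta>\<close> drops out of the expectation. What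
remains are sums of quadratic polynomials over the staircase design.\<close>

definition gls_inner :: "real \<Rightarrow> nat \<Rightarrow> (nat \<Rightarrow> real) \<Rightarrow> (nat \<Rightarrow> real) \<Rightarrow> real" where
  "gls_inner b T u v = (\<Sum>j=1..T. u j * v j) - b * (\<Sum>j=1..T. u j) * (\<Sum>j=1..T. v j)"

lemma gls_inner_commute: "gls_inner b T u v = gls_inner b T v u"
  unfolding gls_inner_def by (simp add: mult.commute)

lemma gls_inner_cong:
  assumes "\<And>j. j \<in> {1..T} \<Longrightarrow> u j = u' j" "\<And>j. j \<in> {1..T} \<Longrightarrow> v j = v' j"
  shows "gls_inner b T u v = gls_inner b T u' v'"
proof -
  have "(\<Sum>j=1..T. u j * v j) = (\<Sum>j=1..T. u' j * v' j)"
    and "(\<Sum>j=1..T. u j) = (\<Sum>j=1..T. u' j)" and "(\<Sum>j=1..T. v j) = (\<Sum>j=1..T. v' j)"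
    using assms by (auto intro: sum.cong)
  then show ?thesis unfolding gls_inner_def by simp
qed

lemma gls_inner_add_left:
  "gls_inner b T (\<lambda>j. u j + v j) w = gls_inner b T u w + gls_inner b T v w"
  unfolding gls_inner_def by (simp add: sum.distrib algebra_simps)

lemma gls_inner_diff_left:
  "gls_inner b T (\<lambda>j. u j - v j) w = gls_inner b T u w - gls_inner b T v w"
  unfolding gls_inner_def by (simp add: sum_subtractf algebra_simps)

lemma gls_inner_mult_left: "gls_inner b T (\<lambda>j. u j * c) v = c * gls_inner b T u v"
proof -
  have "(\<Sum>j=1..T. u j * c * v j) = c * (\<Sum>j=1..T. u j * v j)"
    and "(\<Sum>j=1..T. u j * c) = c * (\<Sum>j=1..T. u j)"
    by (simp_all add: sum_distrib_left algebra_simps)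
  then show ?thesis unfolding gls_inner_def by (simp add: algebra_simps)
qed

lemma gls_inner_sum_left:
  "gls_inner b T (\<lambda>j. \<Sum>i\<in>I. u i j) v = (\<Sum>i\<in>I. gls_inner b T (u i) v)"
proof -
  have "(\<Sum>j=1..T. (\<Sum>i\<in>I. u i j) * v j) = (\<Sum>i\<in>I. \<Sum>j=1..T. u i j * v j)"
    by (simp add: sum_distrib_right) (rule sum.swap)
  moreover have "(\<Sum>j=1..T. \<Sum>i\<in>I. u i j) = (\<Sum>i\<in>I. \<Sum>j=1..T. u i j)"
    by (rule sum.swap)
  ultimately show ?thesis
    unfolding gls_inner_def sum_subtractf
    by (simp only: sum_distrib_left[symmetric] sum_distrib_right[symmetric])
qed

lemma sum_gls_inner_eq_0:
  assumes "\<And>j. j \<in> {1..T} \<Longrightarrow> (\<Sum>i\<in>I. u i j) = 0"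
  shows "(\<Sum>i\<in>I. gls_inner b T v (u i)) = 0"
proof -
  have "(\<Sum>i\<in>I. gls_inner b T v (u i)) = gls_inner b T (\<lambda>j. \<Sum>i\<in>I. u i j) v"
    by (simp add: gls_inner_sum_left gls_inner_commute[of b T v])
  also have "\<dots> = gls_inner b T (\<lambda>_. 0) v"
    using assms by (intro gls_inner_cong) auto
  finally show ?thesis by (simp add: gls_inner_def)
qed

lemma gls_inner_self_diff:
  "gls_inner b T (\<lambda>j. u j - v j) (\<lambda>j. u j - v j)
     = gls_inner b T u u - 2 * gls_inner b T u v + gls_inner b T v v"
  using gls_inner_commute[of b T v u]
  by (simp add: gls_inner_diff_left gls_inner_commute[of b T _ "\<lambda>j. u j - v j"])

lemma gls_inner_eq_sum:
  "gls_inner b T u v = (\<Sum>j=1..T. u j * (v j - b * (\<Sum>k=1..T. v k)))"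
proof -
  have "(\<Sum>j=1..T. u j * (v j - b * (\<Sum>k=1..T. v k)))
      = (\<Sum>j=1..T. u j * v j) - (\<Sum>j=1..T. u j) * (b * (\<Sum>k=1..T. v k))"
    by (simp only: right_diff_distrib sum_subtractf sum_distrib_right[symmetric])
  then show ?thesis unfolding gls_inner_def by (simp add: algebra_simps)
qed

lemma gls_inner_indicator_left:
  "gls_inner b T (\<lambda>j. if j = k then 1 else 0) v
     = (if k \<in> {1..T} then v k - b * (\<Sum>j=1..T. v j) else 0)"
proof -
  have "(\<Sum>j=1..T. (if j = k then 1 else 0) * v j) = (\<Sum>j=1..T. if j = k then v k else 0)"
    by (rule sum.cong) auto
  moreover have "(\<Sum>j=1..T. if j = k then 1 else 0) = (if k \<in> {1..T} then 1 else (0::real))"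
    by (rule sum.delta) simp
  ultimately show ?thesis
    unfolding gls_inner_def by simp
qed

text \<open>By Cauchy-Schwarz \<open>(1'v)\<^sup>2 \<le> T v'v\<close>, so \<open>B\<close> is positive definite as soon as \<open>b T < 1\<close>.\<close>

lemma gls_inner_self_ge:
  assumes "b \<ge> 0" "b * real T < 1"
  shows "gls_inner b T v v \<ge> (1 - b * real T) * (\<Sum>j=1..T. (v j)\<^sup>2)"
proof -
  have "(\<Sum>j=1..T. v j)\<^sup>2 \<le> (\<Sum>j=1..T. (v j)\<^sup>2) * real T"
    using sum_squared_le_sum_of_squares[of v "{1..T}"] by simp
  then have "b * (\<Sum>j=1..T. v j)\<^sup>2 \<le> b * ((\<Sum>j=1..T. (v j)\<^sup>2) * real T)"
    using assms by (simp add: mult_left_mono)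
  then show ?thesis unfolding gls_inner_def by (simp add: power2_eq_square algebra_simps)
qed

lemma gls_inner_self_nonneg:
  assumes "b \<ge> 0" "b * real T < 1"
  shows "gls_inner b T v v \<ge> 0"
  using gls_inner_self_ge[OF assms, of v] assms(2)
  by (smt (verit) mult_nonneg_nonneg sum_nonneg zero_le_power2)

lemma gls_inner_self_le_0_imp:
  assumes "b \<ge> 0" "b * real T < 1" "gls_inner b T v v \<le> 0" "j \<in> {1..T}"
  shows "v j = 0"
proof -
  have "(1 - b * real T) * (\<Sum>j=1..T. (v j)\<^sup>2) \<le> 0"
    using gls_inner_self_ge[OF assms(1,2), of v] assms(3) by linarith
  then have "(\<Sum>j=1..T. (v j)\<^sup>2) = 0"
    using assms(2) by (smt (verit) mult_pos_pos sum_nonneg zero_le_power2)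
  then show ?thesis
    using assms(4) by (simp add: sum_nonneg_eq_0_iff)
qed

lemma sum_quadratic_poly:
  "(\<Sum>i=1..m. A + B * real i + C * (real i)\<^sup>2) =
     A * real m + B * (real m * (real m + 1) / 2) + C * (real m * (real m + 1) * (2 * real m + 1) / 6)"
  by (induction m) (simp_all add: field_simps power2_eq_square)

lemma sw_b_bounds:
  assumes "n \<ge> 1" "sa \<ge> 0" "se > 0"
  shows "sw_b T sa se n \<ge> 0" "sw_b T sa se n * real T < 1"
proof -
  have "se / real n > 0" using assms by simp
  moreover have "real T * sa + se / real n > 0"
    using assms \<open>se / real n > 0\<close> by (simp add: add_nonneg_pos)
  ultimately show "sw_b T sa se n \<ge> 0" "sw_b T sa se n * real T < 1"
    unfolding sw_b_def using assms by (simp_all add: field_simps)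
qed

lemma sum_sw_Sigma_mult:
  assumes "j \<in> {1..T}"
  shows "(\<Sum>l=1..T. sw_Sigma sa se n j l * V l) = sa * (\<Sum>l=1..T. V l) + se / real n * V j"
proof -
  have "(\<Sum>l=1..T. sw_Sigma sa se n j l * V l)
      = (\<Sum>l=1..T. sa * V l + (if j = l then se / real n * V l else 0))"
    by (rule sum.cong) (auto simp: sw_Sigma_def algebra_simps)
  then show ?thesis
    using assms by (simp add: sum.distrib sum_distrib_left)
qed

definition sw_is_Sigma_inv :: "nat \<Rightarrow> real \<Rightarrow> real \<Rightarrow> nat \<Rightarrow> (nat \<Rightarrow> nat \<Rightarrow> real) \<Rightarrow> bool" where
  "sw_is_Sigma_inv T sa se n W \<longleftrightarrow>
     (\<forall>j k. (j \<notin> {1..T} \<or> k \<notin> {1..T}) \<longrightarrow> W j k = 0) \<and>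
     (\<forall>j\<in>{1..T}. \<forall>k\<in>{1..T}.
       (\<Sum>l=1..T. sw_Sigma sa se n j l * W l k) = (if j = k then 1 else 0))"

text \<open>The inverse of \<open>sa 1 1' + s I\<close> by the Sherman-Morrison formula.\<close>

definition sw_Sigma_inv_formula :: "nat \<Rightarrow> real \<Rightarrow> real \<Rightarrow> nat \<Rightarrow> nat \<Rightarrow> nat \<Rightarrow> real" where
  "sw_Sigma_inv_formula T sa se n j k =
     (if j \<in> {1..T} \<and> k \<in> {1..T}
      then ((if j = k then 1 else 0) - sw_b T sa se n) / (se / real n) else 0)"

context
  fixes T n :: nat and sa se :: real
  assumes n: "n \<ge> 1" and sa: "sa \<ge> 0" and se: "se > 0"
begin

lemma sw_b_mult_eq: "sw_b T sa se n * (real T * sa + se / real n) = sa"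
proof -
  have "real T * sa + se / real n > 0"
    using n sa se by (simp add: add_nonneg_pos)
  then show ?thesis unfolding sw_b_def by simp
qed

lemma sw_is_Sigma_inv_formula: "sw_is_Sigma_inv T sa se n (sw_Sigma_inv_formula T sa se n)"
proof -
  define s where "s = se / real n"
  define b where "b = sw_b T sa se n"
  have s: "s > 0" unfolding s_def using n se by simp
  have sab: "sa * ((1 - real T * b) / s) = b"
    using sw_b_mult_eq s unfolding s_def[symmetric] b_def[symmetric] by (simp add: field_simps)
  have colsum: "(\<Sum>l=1..T. sw_Sigma_inv_formula T sa se n l k) = (1 - real T * b) / s"
    if "k \<in> {1..T}" for k
  proof -
    have "(\<Sum>l=1..T. sw_Sigma_inv_formula T sa se n l k)
        = (\<Sum>l=1..T. (if l = k then 1 / s else 0) - b / s)"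
      by (rule sum.cong)
        (use that in \<open>auto simp: sw_Sigma_inv_formula_def s_def[symmetric] b_def[symmetric]
          diff_divide_distrib\<close>)
    then show ?thesis using that by (simp add: sum_subtractf diff_divide_distrib)
  qed
  have "(\<Sum>l=1..T. sw_Sigma sa se n j l * sw_Sigma_inv_formula T sa se n l k)
      = (if j = k then 1 else 0)" if j: "j \<in> {1..T}" and k: "k \<in> {1..T}" for j k
  proof -
    have "(\<Sum>l=1..T. sw_Sigma sa se n j l * sw_Sigma_inv_formula T sa se n l k)
        = b + s * sw_Sigma_inv_formula T sa se n j k"
      using sum_sw_Sigma_mult[OF j] colsum[OF k] sab unfolding s_def by simp
    then show ?thesis
      using j k s unfolding sw_Sigma_inv_formula_def s_def[symmetric] b_def[symmetric]
      by (auto simp: field_simps)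
  qed
  then show ?thesis
    unfolding sw_is_Sigma_inv_def by (auto simp: sw_Sigma_inv_formula_def)
qed

lemma sw_is_Sigma_inv_unique:
  assumes W: "sw_is_Sigma_inv T sa se n W"
  shows "W = sw_Sigma_inv_formula T sa se n"
proof (intro ext)
  fix j k
  define s where "s = se / real n"
  have s: "s > 0" unfolding s_def using n se by simp
  show "W j k = sw_Sigma_inv_formula T sa se n j k"
  proof (cases "j \<in> {1..T} \<and> k \<in> {1..T}")
    case False
    then show ?thesis using W unfolding sw_is_Sigma_inv_def sw_Sigma_inv_formula_def by auto
  next
    case True
    then have j: "j \<in> {1..T}" and k: "k \<in> {1..T}" by auto
    define S where "S = (\<Sum>l=1..T. W l k)"
    have col: "sa * S + s * W i k = (if i = k then 1 else 0)" if "i \<in> {1..T}" for i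
      using W sum_sw_Sigma_mult[OF that, of sa se n "\<lambda>l. W l k"] k that
      unfolding sw_is_Sigma_inv_def S_def s_def by auto
    text \<open>Summing the column equations determines the column sum \<open>S\<close>, and \<open>sa S = b\<close>.\<close>
    have "(\<Sum>i=1..T. sa * S + s * W i k) = (\<Sum>i=1..T. (if i = k then 1 else 0))"
      by (rule sum.cong) (use col in auto)
    then have "(real T * sa + s) * S = 1"
      using k by (simp add: sum.distrib sum_distrib_left[symmetric] S_def algebra_simps)
    then have "sw_b T sa se n = sa * S"
      using sw_b_mult_eq unfolding s_def[symmetric] by (metis mult.assoc mult.commute mult_1)
    then show ?thesis
      using col[OF j] j k s unfolding sw_Sigma_inv_formula_def s_def[symmetric]
      by (simp add: field_simps)
  qed
qed

lemma sw_Sigma_inv_eq: "sw_Sigma_inv T sa se n = sw_Sigma_inv_formula T sa se n"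
  unfolding sw_Sigma_inv_def sw_is_Sigma_inv_def[symmetric]
  using sw_is_Sigma_inv_formula sw_is_Sigma_inv_unique by (rule the_equality)

lemma sw_Sigma_inv_quadratic_form:
  "(\<Sum>j=1..T. \<Sum>k=1..T. r j * sw_Sigma_inv T sa se n j k * r k)
     = gls_inner (sw_b T sa se n) T r r / (se / real n)"
proof -
  define s where "s = se / real n"
  define b where "b = sw_b T sa se n"
  have row: "(\<Sum>k=1..T. r j * sw_Sigma_inv T sa se n j k * r k)
      = r j * r j / s - b / s * (r j * (\<Sum>k=1..T. r k))" if "j \<in> {1..T}" for j
  proof -
    have "(\<Sum>k=1..T. r j * sw_Sigma_inv T sa se n j k * r k)
        = (\<Sum>k=1..T. (if j = k then r j * r j / s else 0) - b / s * (r j * r k))"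
      by (rule sum.cong) (use that in \<open>auto simp: sw_Sigma_inv_eq sw_Sigma_inv_formula_def
          s_def[symmetric] b_def[symmetric] diff_divide_distrib algebra_simps\<close>)
    then show ?thesis using that by (simp add: sum_subtractf sum_distrib_left)
  qed
  have "(\<Sum>j=1..T. \<Sum>k=1..T. r j * sw_Sigma_inv T sa se n j k * r k)
      = (\<Sum>j=1..T. r j * r j / s - b / s * (r j * (\<Sum>k=1..T. r k)))"
    by (rule sum.cong[OF refl]) (rule row)
  also have "\<dots> = gls_inner b T r r / s"
    unfolding gls_inner_def sum_subtractf
    by (simp add: sum_divide_distrib[symmetric] sum_distrib_left[symmetric]
        sum_distrib_right[symmetric] diff_divide_distrib)
  finally show ?thesis unfolding s_def b_def .
qed

end

definition sw_gls_rss :: "real \<Rightarrow> nat \<Rightarrow> (nat \<Rightarrow> nat \<Rightarrow> real) \<Rightarrow> (nat \<Rightarrow> real) \<Rightarrow> real \<Rightarrow> real" where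
  "sw_gls_rss b T y beta theta =
     (\<Sum>i=1..T-1. gls_inner b T (\<lambda>j. y i j - beta j - sw_x i j * theta)
                                 (\<lambda>j. y i j - beta j - sw_x i j * theta))"

lemma sw_gls_obj_eq:
  assumes "n \<ge> 1" "sa \<ge> 0" "se > 0"
  shows "sw_gls_obj T sa se n y beta theta = sw_gls_rss (sw_b T sa se n) T y beta theta / (se / real n)"
  unfolding sw_gls_obj_def sw_gls_rss_def sw_Sigma_inv_quadratic_form[OF assms] sum_divide_distrib ..

definition sw_xbar :: "nat \<Rightarrow> nat \<Rightarrow> real" where
  "sw_xbar T j = (\<Sum>i=1..T-1. sw_x i j) / real (T - 1)"

definition sw_xc :: "nat \<Rightarrow> nat \<Rightarrow> nat \<Rightarrow> real" where
  "sw_xc T i j = sw_x i j - sw_xbar T j"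

definition sw_ybar :: "nat \<Rightarrow> (nat \<Rightarrow> nat \<Rightarrow> real) \<Rightarrow> nat \<Rightarrow> real" where
  "sw_ybar T y j = (\<Sum>i=1..T-1. y i j) / real (T - 1)"

definition sw_info :: "real \<Rightarrow> nat \<Rightarrow> real" where
  "sw_info b T = (\<Sum>i=1..T-1. gls_inner b T (sw_xc T i) (sw_xc T i))"

definition sw_score :: "real \<Rightarrow> nat \<Rightarrow> (nat \<Rightarrow> nat \<Rightarrow> real) \<Rightarrow> real" where
  "sw_score b T y = (\<Sum>i=1..T-1. gls_inner b T (y i) (sw_xc T i))"

definition sw_theta_gls :: "real \<Rightarrow> nat \<Rightarrow> (nat \<Rightarrow> nat \<Rightarrow> real) \<Rightarrow> real" where
  "sw_theta_gls b T y = sw_score b T y / sw_info b T"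

definition sw_beta_gls :: "real \<Rightarrow> nat \<Rightarrow> (nat \<Rightarrow> nat \<Rightarrow> real) \<Rightarrow> nat \<Rightarrow> real" where
  "sw_beta_gls b T y j = sw_ybar T y j - sw_xbar T j * sw_theta_gls b T y"

definition sw_gls_resid :: "real \<Rightarrow> nat \<Rightarrow> (nat \<Rightarrow> nat \<Rightarrow> real) \<Rightarrow> nat \<Rightarrow> nat \<Rightarrow> real" where
  "sw_gls_resid b T y i j = y i j - sw_beta_gls b T y j - sw_x i j * sw_theta_gls b T y"

lemma sw_score_cong:
  assumes "\<And>i j. i \<in> {1..T-1} \<Longrightarrow> j \<in> {1..T} \<Longrightarrow> y i j = y' i j"
  shows "sw_score b T y = sw_score b T y'"
  unfolding sw_score_def using assms by (intro sum.cong refl gls_inner_cong) auto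

lemma sw_score_eq_sum:
  "sw_score b T y = (\<Sum>i=1..T-1. \<Sum>j=1..T. y i j * (sw_xc T i j - b * (\<Sum>k=1..T. sw_xc T i k)))"
  unfolding sw_score_def gls_inner_eq_sum ..

lemma integral_sw_score:
  assumes "\<And>i j. i \<in> {1..T-1} \<Longrightarrow> j \<in> {1..T} \<Longrightarrow> integrable M (\<lambda>\<omega>. Y i \<omega> j)"
  shows "(\<integral>\<omega>. sw_score b T (\<lambda>i j. Y i \<omega> j) \<partial>M) = sw_score b T (\<lambda>i j. \<integral>\<omega>. Y i \<omega> j \<partial>M)"
proof -
  have "(\<integral>\<omega>. (\<Sum>j=1..T. Y i \<omega> j * c j) \<partial>M) = (\<Sum>j=1..T. (\<integral>\<omega>. Y i \<omega> j \<partial>M) * c j)"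
    if "i \<in> {1..T-1}" for i and c :: "nat \<Rightarrow> real"
    by (subst Bochner_Integration.integral_sum) (use that in \<open>auto intro: integrable_mult_left assms\<close>)
  moreover have "(\<integral>\<omega>. (\<Sum>i=1..T-1. \<Sum>j=1..T. Y i \<omega> j * c i j) \<partial>M)
      = (\<Sum>i=1..T-1. (\<integral>\<omega>. (\<Sum>j=1..T. Y i \<omega> j * c i j) \<partial>M))" for c :: "nat \<Rightarrow> nat \<Rightarrow> real"
    by (rule Bochner_Integration.integral_sum) (auto intro!: integrable_sum integrable_mult_left assms)
  ultimately show ?thesis
    unfolding sw_score_eq_sum by simp
qed

context
  fixes T :: nat
  assumes T2: "T \<ge> 2"
begin

lemma real_T_minus_1_neq_0: "real (T - 1) \<noteq> 0"
  using T2 by simp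

lemma real_T_pred_cases:
  obtains m :: real where "real (T - 1) = m" "real T = m + 1" "m \<noteq> 0"
  using T2 by (intro that[of "real (T - 1)"]) (simp_all add: of_nat_diff)

lemma sum_sw_xc: "(\<Sum>i=1..T-1. sw_xc T i j) = 0"
  unfolding sw_xc_def sw_xbar_def using real_T_minus_1_neq_0 by (simp add: sum_subtractf)

lemma sw_gls_resid_eq:
  "sw_gls_resid b T y i j = (y i j - sw_ybar T y j) - sw_xc T i j * sw_theta_gls b T y"
  unfolding sw_gls_resid_def sw_beta_gls_def sw_xc_def by (simp add: algebra_simps)

lemma sum_sw_gls_resid: "(\<Sum>i=1..T-1. sw_gls_resid b T y i j) = 0"
  unfolding sw_gls_resid_eq sum_subtractf sum_distrib_right[symmetric] sum_sw_xc
  using real_T_minus_1_neq_0 by (simp add: sw_ybar_def)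

lemma sw_gls_normal_eq:
  assumes "sw_info b T \<noteq> 0"
  shows "(\<Sum>i=1..T-1. gls_inner b T (sw_gls_resid b T y i) (sw_x i)) = 0"
proof -
  let ?r = "sw_gls_resid b T y" and ?th = "sw_theta_gls b T y"
  have "gls_inner b T (?r i) (sw_x i)
      = gls_inner b T (?r i) (sw_xc T i) + gls_inner b T (sw_xbar T) (?r i)" for i
  proof -
    have "sw_x i = (\<lambda>j. sw_xc T i j + sw_xbar T j)" by (simp add: sw_xc_def)
    then show ?thesis
      by (simp add: gls_inner_commute[of b T "?r i"] gls_inner_add_left)
  qed
  moreover have "gls_inner b T (?r i) (sw_xc T i)
      = gls_inner b T (y i) (sw_xc T i) - gls_inner b T (sw_ybar T y) (sw_xc T i)
        - ?th * gls_inner b T (sw_xc T i) (sw_xc T i)" for i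
  proof -
    have "?r i = (\<lambda>j. y i j - sw_ybar T y j - sw_xc T i j * ?th)"
      by (rule ext) (simp add: sw_gls_resid_eq)
    then show ?thesis by (simp add: gls_inner_diff_left gls_inner_mult_left)
  qed
  moreover have "(\<Sum>i=1..T-1. gls_inner b T (sw_xbar T) (?r i)) = 0"
    by (rule sum_gls_inner_eq_0) (rule sum_sw_gls_resid)
  moreover have "(\<Sum>i=1..T-1. gls_inner b T (sw_ybar T y) (sw_xc T i)) = 0"
    by (rule sum_gls_inner_eq_0) (rule sum_sw_xc)
  ultimately have "(\<Sum>i=1..T-1. gls_inner b T (?r i) (sw_x i)) = sw_score b T y - ?th * sw_info b T"
    by (simp add: sum.distrib sum_subtractf sum_distrib_left sw_score_def sw_info_def)
  then show ?thesis
    using assms by (simp add: sw_theta_gls_def)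
qed

text \<open>Pythagoras for the GLS fit: the residual at the candidate solution is
\<open>B\<close>-orthogonal to every change of the parameters.\<close>

lemma sw_gls_rss_decomp:
  assumes "sw_info b T \<noteq> 0"
  shows "sw_gls_rss b T y beta theta = sw_gls_rss b T y (sw_beta_gls b T y) (sw_theta_gls b T y) +
    (\<Sum>i=1..T-1. gls_inner b T
       (\<lambda>j. beta j - sw_beta_gls b T y j + sw_x i j * (theta - sw_theta_gls b T y))
       (\<lambda>j. beta j - sw_beta_gls b T y j + sw_x i j * (theta - sw_theta_gls b T y)))"
proof -
  let ?r = "sw_gls_resid b T y"
  define d where "d j = beta j - sw_beta_gls b T y j" for j
  define e where "e = theta - sw_theta_gls b T y"
  define v where "v i j = d j + sw_x i j * e" for i j
  have split: "gls_inner b T (?r i) (v i) = gls_inner b T d (?r i) + e * gls_inner b T (?r i) (sw_x i)"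
    for i
    unfolding v_def gls_inner_commute[of b T "?r i"] gls_inner_add_left gls_inner_mult_left ..
  have "(\<Sum>i=1..T-1. gls_inner b T d (?r i)) = 0"
    by (rule sum_gls_inner_eq_0) (rule sum_sw_gls_resid)
  then have orth: "(\<Sum>i=1..T-1. gls_inner b T (?r i) (v i)) = 0"
    unfolding split sum.distrib sum_distrib_left[symmetric] sw_gls_normal_eq[OF assms] by simp
  have diff: "(\<lambda>j. y i j - beta j - sw_x i j * theta) = (\<lambda>j. ?r i j - v i j)" for i
    by (simp add: v_def d_def e_def sw_gls_resid_def algebra_simps)
  have resid: "(\<lambda>j. y i j - sw_beta_gls b T y j - sw_x i j * sw_theta_gls b T y) = ?r i" for i
    by (rule ext) (simp add: sw_gls_resid_def)
  have "sw_gls_rss b T y beta theta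
      = (\<Sum>i=1..T-1. gls_inner b T (?r i) (?r i) - 2 * gls_inner b T (?r i) (v i)
                      + gls_inner b T (v i) (v i))"
    unfolding sw_gls_rss_def diff gls_inner_self_diff ..
  also have "\<dots> = sw_gls_rss b T y (sw_beta_gls b T y) (sw_theta_gls b T y)
                  + (\<Sum>i=1..T-1. gls_inner b T (v i) (v i))"
    unfolding sw_gls_rss_def resid sum.distrib sum_subtractf sum_distrib_left[symmetric] orth
    by simp
  finally show ?thesis unfolding v_def d_def e_def .
qed

lemma sw_xbar_eq:
  assumes "j \<in> {1..T}"
  shows "sw_xbar T j = (real j - 1) / real (T - 1)"
proof -
  have "(\<Sum>i=1..T-1. sw_x i j) = (\<Sum>i\<in>{i\<in>{1..T-1}. i < j}. 1)"
    by (subst sum.inter_filter) (simp_all add: sw_x_def)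
  also have "{i\<in>{1..T-1}. i < j} = {1..j-1}" using assms by auto
  finally show ?thesis
    using assms unfolding sw_xbar_def by (simp add: of_nat_diff)
qed

lemma sum_sw_x_cluster:
  assumes "i \<in> {1..T-1}"
  shows "(\<Sum>j=1..T. sw_x i j) = real T - real i"
proof -
  have "(\<Sum>j=1..T. sw_x i j) = (\<Sum>j\<in>{j\<in>{1..T}. i < j}. 1)"
    by (subst sum.inter_filter) (simp_all add: sw_x_def)
  also have "{j\<in>{1..T}. i < j} = {i+1..T}" using assms by auto
  moreover have "i \<le> T" using assms by auto
  ultimately show ?thesis by (simp add: of_nat_diff)
qed

lemma sum_sw_xbar: "(\<Sum>j=1..T. sw_xbar T j) = real T / 2"
proof -
  have "(\<Sum>j=1..T. sw_xbar T j)
      = (\<Sum>j=1..T. - 1 / real (T - 1) + 1 / real (T - 1) * real j + 0 * (real j)\<^sup>2)"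
    by (rule sum.cong) (simp_all add: sw_xbar_eq diff_divide_distrib)
  also have "\<dots> = real T / 2"
  proof -
    obtain m where "real (T - 1) = m" "real T = m + 1" "m \<noteq> 0"
      by (rule real_T_pred_cases)
    then show ?thesis
      unfolding sum_quadratic_poly by (simp add: field_simps)
  qed
  finally show ?thesis .
qed

lemma sum_sw_xc_cluster:
  assumes "i \<in> {1..T-1}"
  shows "(\<Sum>j=1..T. sw_xc T i j) = real T / 2 - real i"
  unfolding sw_xc_def sum_subtractf sum_sw_x_cluster[OF assms] sum_sw_xbar by simp

lemma gls_inner_sw_xc_sw_x:
  assumes "i \<in> {1..T-1}"
  shows "gls_inner b T (sw_xc T i) (sw_x i)
    = (\<Sum>j=1..T. sw_x i j * (1 - sw_xbar T j)) - b * ((real T / 2 - real i) * (real T - real i))"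
proof -
  have "(\<Sum>j=1..T. sw_xc T i j * sw_x i j) = (\<Sum>j=1..T. sw_x i j * (1 - sw_xbar T j))"
    by (rule sum.cong) (auto simp: sw_xc_def sw_x_def)
  then show ?thesis
    unfolding gls_inner_def sum_sw_xc_cluster[OF assms] sum_sw_x_cluster[OF assms] by simp
qed

lemma sum_sw_x_one_minus_xbar:
  "(\<Sum>i=1..T-1. \<Sum>j=1..T. sw_x i j * (1 - sw_xbar T j)) =
     (\<Sum>j=1..T. - real T / real (T - 1) + (real T + 1) / real (T - 1) * real j
                 + - 1 / real (T - 1) * (real j)\<^sup>2)"
proof -
  have "(\<Sum>i=1..T-1. \<Sum>j=1..T. sw_x i j * (1 - sw_xbar T j))
      = (\<Sum>j=1..T. (\<Sum>i=1..T-1. sw_x i j) * (1 - sw_xbar T j))"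
    by (subst sum.swap) (simp add: sum_distrib_right)
  also have "\<dots> = (\<Sum>j=1..T. real (T - 1) * sw_xbar T j * (1 - sw_xbar T j))"
    using real_T_minus_1_neq_0 by (simp add: sw_xbar_def)
  also have "\<dots> = (\<Sum>j=1..T. - real T / real (T - 1) + (real T + 1) / real (T - 1) * real j
                 + - 1 / real (T - 1) * (real j)\<^sup>2)"
  proof (intro sum.cong refl)
    fix j assume "j \<in> {1..T}"
    moreover obtain m where "real (T - 1) = m" "real T = m + 1" "m \<noteq> 0"
      by (rule real_T_pred_cases)
    ultimately show "real (T - 1) * sw_xbar T j * (1 - sw_xbar T j)
        = - real T / real (T - 1) + (real T + 1) / real (T - 1) * real j
          + - 1 / real (T - 1) * (real j)\<^sup>2"
      by (simp add: sw_xbar_eq field_simps power2_eq_square)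
  qed
  finally show ?thesis .
qed

lemma sw_info_eq: "sw_info b T = real T * (real T - 2) * (2 + b - b * real T) / 12"
proof -
  have "sw_info b T = (\<Sum>i=1..T-1. gls_inner b T (sw_xc T i) (sw_x i))"
  proof -
    have "gls_inner b T (sw_xc T i) (sw_xc T i)
        = gls_inner b T (sw_xc T i) (sw_x i) - gls_inner b T (sw_xbar T) (sw_xc T i)" for i
    proof -
      have "sw_xc T i = (\<lambda>j. sw_x i j - sw_xbar T j)" by (rule ext) (simp add: sw_xc_def)
      then show ?thesis
        by (metis gls_inner_commute gls_inner_diff_left)
    qed
    moreover have "(\<Sum>i=1..T-1. gls_inner b T (sw_xbar T) (sw_xc T i)) = 0"
      by (rule sum_gls_inner_eq_0) (rule sum_sw_xc)
    ultimately show ?thesis by (simp add: sw_info_def sum_subtractf)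
  qed
  also have "\<dots> = (\<Sum>i=1..T-1. (\<Sum>j=1..T. sw_x i j * (1 - sw_xbar T j))
                                 - b * ((real T / 2 - real i) * (real T - real i)))"
    by (rule sum.cong[OF refl]) (rule gls_inner_sw_xc_sw_x)
  also have "\<dots> = (\<Sum>i=1..T-1. \<Sum>j=1..T. sw_x i j * (1 - sw_xbar T j))
      - b * (\<Sum>i=1..T-1. (real T / 2 - real i) * (real T - real i))"
    by (simp only: sum_subtractf sum_distrib_left)
  also have "(\<Sum>i=1..T-1. (real T / 2 - real i) * (real T - real i))
      = (\<Sum>i=1..T-1. real T * real T / 2 + - 3 * real T / 2 * real i + 1 * (real i)\<^sup>2)"
    by (rule sum.cong) (simp_all add: field_simps power2_eq_square)
  also have "(\<Sum>i=1..T-1. \<Sum>j=1..T. sw_x i j * (1 - sw_xbar T j))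
      - b * (\<Sum>i=1..T-1. real T * real T / 2 + - 3 * real T / 2 * real i + 1 * (real i)\<^sup>2)
      = real T * (real T - 2) * (2 + b - b * real T) / 12"
  proof -
    obtain m where "real (T - 1) = m" "real T = m + 1" "m \<noteq> 0"
      by (rule real_T_pred_cases)
    then show ?thesis
      unfolding sum_sw_x_one_minus_xbar sum_quadratic_poly by (simp add: field_simps)
  qed
  finally show ?thesis .
qed

lemma gls_inner_sw_Z_sw_xc:
  assumes i: "i \<in> {1..T-1}" and e: "e \<in> {1..T-1}"
  shows "gls_inner b T (\<lambda>j. sw_Z i j e) (sw_xc T i) =
    (if i + e \<le> T then 1 - (real i + real e - 1) / real (T - 1) - b * (real T / 2 - real i) else 0)"
proof -
  have Z: "(\<lambda>j. sw_Z i j e) = (\<lambda>j. if j = i + e then 1 else 0)"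
    using e by (intro ext) (auto simp: sw_Z_def sw_exptime_def)
  have "sw_xc T i (i + e) = 1 - (real i + real e - 1) / real (T - 1)" if "i + e \<le> T"
    using that e by (simp add: sw_xc_def sw_x_def sw_xbar_eq)
  then show ?thesis
    unfolding Z gls_inner_indicator_left sum_sw_xc_cluster[OF i] using i by auto
qed

lemma sum_gls_inner_sw_Z_sw_xc:
  assumes e: "e \<in> {1..T-1}"
  shows "(\<Sum>i=1..T-1. gls_inner b T (\<lambda>j. sw_Z i j e) (sw_xc T i)) =
    (real T - real e) * ((b - 1 - b * real T) * real e + (1 + b) * (real T - 1)) / (2 * (real T - 1))"
proof -
  have "(\<Sum>i=1..T-1. gls_inner b T (\<lambda>j. sw_Z i j e) (sw_xc T i))
      = (\<Sum>i=1..T-1. if i + e \<le> T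
           then 1 - (real i + real e - 1) / real (T - 1) - b * (real T / 2 - real i) else 0)"
    by (rule sum.cong[OF refl]) (rule gls_inner_sw_Z_sw_xc[OF _ e])
  also have "\<dots> = (\<Sum>i\<in>{i\<in>{1..T-1}. i + e \<le> T}.
           1 - (real i + real e - 1) / real (T - 1) - b * (real T / 2 - real i))"
    by (rule sum.inter_filter[symmetric]) simp
  also have "{i\<in>{1..T-1}. i + e \<le> T} = {1..T-e}" using e by auto
  also have "(\<Sum>i=1..T-e. 1 - (real i + real e - 1) / real (T - 1) - b * (real T / 2 - real i))
      = (\<Sum>i=1..T-e. (1 - (real e - 1) / real (T - 1) - b * real T / 2)
                      + (b - 1 / real (T - 1)) * real i + 0 * (real i)\<^sup>2)"
    by (intro sum.cong refl) (simp add: diff_divide_distrib add_divide_distrib algebra_simps)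
  also have "\<dots> = (real T - real e) * ((b - 1 - b * real T) * real e + (1 + b) * (real T - 1))
                  / (2 * (real T - 1))"
  proof -
    have "e \<le> T" using e by auto
    then have "real (T - e) = real T - real e" by (simp add: of_nat_diff)
    moreover obtain m where "real (T - 1) = m" "real T = m + 1" "m \<noteq> 0"
      by (rule real_T_pred_cases)
    ultimately show ?thesis
      unfolding sum_quadratic_poly by (simp add: field_simps)
  qed
  finally show ?thesis .
qed

lemma sw_score_mean:
  "sw_score b T (\<lambda>i j. beta j + (\<Sum>e=1..T-1. sw_Z i j e * delta e)) =
    (\<Sum>e=1..T-1. (real T - real e) * ((b - 1 - b * real T) * real e + (1 + b) * (real T - 1))
                  * delta e) / (2 * (real T - 1))"
proof -
  have "sw_score b T (\<lambda>i j. beta j + (\<Sum>e=1..T-1. sw_Z i j e * delta e))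
      = (\<Sum>i=1..T-1. gls_inner b T beta (sw_xc T i))
        + (\<Sum>e=1..T-1. delta e * (\<Sum>i=1..T-1. gls_inner b T (\<lambda>j. sw_Z i j e) (sw_xc T i)))"
    unfolding sw_score_def gls_inner_add_left gls_inner_sum_left gls_inner_mult_left sum.distrib
    by (subst sum.swap) (simp add: sum_distrib_left)
  also have "(\<Sum>i=1..T-1. gls_inner b T beta (sw_xc T i)) = 0"
    by (rule sum_gls_inner_eq_0) (rule sum_sw_xc)
  also have "(\<Sum>e=1..T-1. delta e * (\<Sum>i=1..T-1. gls_inner b T (\<lambda>j. sw_Z i j e) (sw_xc T i)))
      = (\<Sum>e=1..T-1. delta e * ((real T - real e) * ((b - 1 - b * real T) * real e
                                  + (1 + b) * (real T - 1)) / (2 * (real T - 1))))"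
    by (intro sum.cong refl arg_cong[where f="\<lambda>x. delta _ * x"] sum_gls_inner_sw_Z_sw_xc)
  finally show ?thesis
    by (simp add: sum_divide_distrib ac_simps)
qed

end

lemma sw_theta_hat_eq:
  assumes T3: "T \<ge> 3" and n: "n \<ge> 1" and sa: "sa \<ge> 0" and se: "se > 0"
  shows "sw_theta_hat T sa se n y = sw_theta_gls (sw_b T sa se n) T y"
proof -
  define b where "b = sw_b T sa se n"
  define s where "s = se / real n"
  have b: "b \<ge> 0" "b * real T < 1" using sw_b_bounds[OF n sa se] unfolding b_def by auto
  have s: "s > 0" unfolding s_def using n se by simp
  have T2: "T \<ge> 2" using T3 by simp
  have "sw_info b T > 0"
    using T3 b by (simp add: sw_info_eq[OF T2] mult_pos_pos)
  then have info: "sw_info b T \<noteq> 0" by simp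
  let ?th = "sw_theta_gls b T y" and ?bs = "sw_beta_gls b T y"
  define V where "V beta theta i = gls_inner b T
       (\<lambda>j. beta j - ?bs j + sw_x i j * (theta - ?th))
       (\<lambda>j. beta j - ?bs j + sw_x i j * (theta - ?th))" for beta theta i
  define R where "R = sw_gls_obj T sa se n y ?bs ?th"
  have obj: "sw_gls_obj T sa se n y beta theta = R + (\<Sum>i=1..T-1. V beta theta i) / s"
    for beta theta
    unfolding R_def sw_gls_obj_eq[OF n sa se] b_def[symmetric] s_def[symmetric] V_def
      sw_gls_rss_decomp[OF T2 info, of y beta theta] add_divide_distrib ..
  have V: "V beta theta i \<ge> 0" for beta theta i
    unfolding V_def by (rule gls_inner_self_nonneg[OF b])
  show ?thesis
    unfolding sw_theta_hat_def b_def[symmetric]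
  proof (rule the_equality)
    show "\<exists>beta. \<forall>beta' theta'.
        sw_gls_obj T sa se n y beta ?th \<le> sw_gls_obj T sa se n y beta' theta'"
    proof (intro exI[of _ ?bs] allI)
      fix beta theta
      show "sw_gls_obj T sa se n y ?bs ?th \<le> sw_gls_obj T sa se n y beta theta"
      proof -
        have "R \<le> R + (\<Sum>i=1..T-1. V beta theta i) / s" using V s by (simp add: sum_nonneg)
        then show ?thesis by (simp only: obj[of beta theta] R_def)
      qed
    qed
  next
    fix theta
    assume "\<exists>beta. \<forall>beta' theta'.
      sw_gls_obj T sa se n y beta theta \<le> sw_gls_obj T sa se n y beta' theta'"
    then obtain beta where "sw_gls_obj T sa se n y beta theta \<le> R"
      unfolding R_def by blast
    then have sum_le: "(\<Sum>i=1..T-1. V beta theta i) \<le> 0"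
      unfolding obj using s by (simp add: divide_le_0_iff)
    have Vle: "V beta theta i \<le> 0" if "i \<in> {1..T-1}" for i
    proof -
      have "V beta theta i \<le> (\<Sum>i=1..T-1. V beta theta i)"
        by (rule member_le_sum) (use V that in auto)
      then show ?thesis using sum_le by linarith
    qed
    have w: "beta 2 - ?bs 2 + sw_x i 2 * (theta - ?th) = 0" if "i \<in> {1..T-1}" for i
      using gls_inner_self_le_0_imp[OF b Vle[OF that, unfolded V_def], of 2] T3 by simp
    text \<open>In period 2 cluster 1 is treated and cluster 2 is not.\<close>
    show "theta = ?th"
      using w[of 1] w[of 2] T3 by (simp add: sw_x_def)
  qed
qed

lemma sw_theta_gls_mean:
  assumes "T \<ge> 3" and "2 + b - b * real T \<noteq> 0"
  shows "sw_theta_gls b T (\<lambda>i j. beta j + (\<Sum>e=1..T-1. sw_Z i j e * delta e)) =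
    6 * (\<Sum>j=1..T-1. (real T - real j) * ((b - 1 - b * real T) * real j + (1 + b) * (real T - 1))
           * delta j)
    / (real T * (real T - 1) * (real T - 2) * (2 + b - b * real T))"
proof -
  have T2: "T \<ge> 2" using assms(1) by simp
  have "real T - 1 \<noteq> 0" "real T - 2 \<noteq> 0" "real T \<noteq> 0" using assms(1) by auto
  then show ?thesis
    using assms(2) unfolding sw_theta_gls_def sw_score_mean[OF T2] sw_info_eq[OF T2]
    by (simp add: divide_simps)
qed

theorem mainTheorem3:
  fixes M :: "'a measure" and T n :: nat and sa se :: real
    and Y :: "nat \<Rightarrow> 'a \<Rightarrow> nat \<Rightarrow> real"
    and beta :: "nat \<Rightarrow> real" and delta :: "nat \<Rightarrow> real"
  assumes "prob_space M"
    and "T \<ge> 3" and "n \<ge> 1" and "sa \<ge> 0" and "se > 0"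
    and "\<And>i j. i \<in> {1..T-1} \<Longrightarrow> j \<in> {1..T} \<Longrightarrow> integrable M (\<lambda>\<omega>. Y i \<omega> j)"
    and "\<And>i j. i \<in> {1..T-1} \<Longrightarrow> j \<in> {1..T} \<Longrightarrow>
           (\<integral>\<omega>. Y i \<omega> j \<partial>M) = beta j + (\<Sum>e=1..T-1. sw_Z i j e * delta e)"
    and "2 + sw_b T sa se n - sw_b T sa se n * real T \<noteq> 0"
  shows "(\<integral>\<omega>. sw_theta_hat T sa se n (\<lambda>i j. Y i \<omega> j) \<partial>M) =
    6 * (\<Sum>j=1..T-1. (real T - real j) *
           ((sw_b T sa se n - 1 - sw_b T sa se n * real T) * real j
            + (1 + sw_b T sa se n) * (real T - 1)) * delta j)
    / (real T * (real T - 1) * (real T - 2) *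
       (2 + sw_b T sa se n - sw_b T sa se n * real T))"
proof -
  define b where "b = sw_b T sa se n"
  have "(\<integral>\<omega>. sw_theta_hat T sa se n (\<lambda>i j. Y i \<omega> j) \<partial>M)
      = (\<integral>\<omega>. sw_score b T (\<lambda>i j. Y i \<omega> j) \<partial>M) / sw_info b T"
    by (simp add: sw_theta_hat_eq[OF assms(2-5)] sw_theta_gls_def b_def)
  also have "\<dots> = sw_score b T (\<lambda>i j. \<integral>\<omega>. Y i \<omega> j \<partial>M) / sw_info b T"
    by (simp only: integral_sw_score[OF assms(6)])
  also have "sw_score b T (\<lambda>i j. \<integral>\<omega>. Y i \<omega> j \<partial>M)
      = sw_score b T (\<lambda>i j. beta j + (\<Sum>e=1..T-1. sw_Z i j e * delta e))"
    by (rule sw_score_cong) (rule assms(7))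
  also have "\<dots> / sw_info b T = 6 * (\<Sum>j=1..T-1. (real T - real j) *
           ((b - 1 - b * real T) * real j + (1 + b) * (real T - 1)) * delta j)
    / (real T * (real T - 1) * (real T - 2) * (2 + b - b * real T))"
    using sw_theta_gls_mean[OF assms(2) assms(8)[folded b_def]] unfolding sw_theta_gls_def .
  finally show ?thesis unfolding b_def .
qed

end
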